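(* Let $n>3$ be an integer and let $L(n)$ be the graph defined in the context below. Then $L(n)$ is a vertex-transitive integral graph, and the set of distinct eigenvalues of $L(n)$ is exactly $\{-2,-1,0,n-2,n-1\}$.
   Context: Let $[n]=\{1,2,\dots,n\}$. Let $H(n)$ be the graph whose vertex set is $\{v : v\subseteq [n],\ |v|\in\{1,2\}\}$, where two vertices $v,w$ are adjacent if and only if $v\subset w$ or $w\subset v$ (equivalently, $H(n)$ is the subgraph of the hypercube $Q_n$ induced by the vertices of weight $1$ and $2$). Let $L(n)$ be the line graph of $H(n)$: its vertices are the edges $\{\{i\},\{i,j\}\}$ of $H(n)$ (with $i\neq j$ in $[n]$), denoted $[i,ij]$, and two such vertices are adjacent iff, as edges of $H(n)$, they share exactly one endpoint. The eigenvalues of a graph are the eigenvalues of its adjacency matrix; a graph is integral if all its eigenvalues are integers; a graph is vertex-transitive if its automorphism group acts transitively on its vertex set. *)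

theory Defs
  imports Complex_Main
begin

definition H_vertices :: "nat \<Rightarrow> nat set set" where
  "H_vertices n = {v. v \<subseteq> {1..n} \<and> (card v = 1 \<or> card v = 2)}"

definition H_edges :: "nat \<Rightarrow> nat set set set" where
  "H_edges n = {{v, w} | v w. v \<in> H_vertices n \<and> w \<in> H_vertices n \<and> (v \<subset> w \<or> w \<subset> v)}"

text \<open>L(n), the line graph of H(n): vertex set and adjacency (share exactly one endpoint).\<close>
definition L_vertices :: "nat \<Rightarrow> nat set set set" where
  "L_vertices n = H_edges n"

definition L_adj :: "nat set set \<Rightarrow> nat set set \<Rightarrow> bool" where
  "L_adj e f \<longleftrightarrow> card (e \<inter> f) = 1"

definition graph_eigenvalue :: "'a set \<Rightarrow> ('a \<Rightarrow> 'a \<Rightarrow> bool) \<Rightarrow> complex \<Rightarrow> bool" where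
  "graph_eigenvalue V E \<mu> \<longleftrightarrow>
     (\<exists>x :: 'a \<Rightarrow> complex. (\<exists>v\<in>V. x v \<noteq> 0) \<and>
        (\<forall>v\<in>V. (\<Sum>w\<in>{w\<in>V. E v w}. x w) = \<mu> * x v))"

definition integral_graph :: "'a set \<Rightarrow> ('a \<Rightarrow> 'a \<Rightarrow> bool) \<Rightarrow> bool" where
  "integral_graph V E \<longleftrightarrow> (\<forall>\<mu>. graph_eigenvalue V E \<mu> \<longrightarrow> \<mu> \<in> \<int>)"

definition vertex_transitive :: "'a set \<Rightarrow> ('a \<Rightarrow> 'a \<Rightarrow> bool) \<Rightarrow> bool" where
  "vertex_transitive V E \<longleftrightarrow>
     (\<forall>u\<in>V. \<forall>v\<in>V. \<exists>\<sigma>. bij_betw \<sigma> V V \<and>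
        (\<forall>x\<in>V. \<forall>y\<in>V. E x y \<longleftrightarrow> E (\<sigma> x) (\<sigma> y)) \<and> \<sigma> u = v)"

end

theory Submission
  imports Defs "HOL-Combinatorics.Permutations"
begin

text \<open>The vertex [i,ij] of L(n) is the arc (i,j) of the complete digraph on [n]; it is adjacent
  exactly to the arcs (i,k) with k \<noteq> j and to the reverse arc (j,i). Let y be an eigenvector for \<mu>,
  R i = \<Sum> k. y(i,k) its row sums and T = \<Sum> i. R i. Combining the eigen-equations at (i,j) and
  (j,i) gives \<mu>(\<mu>+2) y(i,j) = (\<mu>+1) R i + R j; summing over j gives c R i = T with
  c = (\<mu>+1)(\<mu>-n+2), and summing over i gives c T = n T. So either c = 0, or T = 0 and all R i
  vanish, whence \<mu>(\<mu>+2) = 0, or c = n, i.e. (\<mu>-n+1)(\<mu>+2) = 0. Conversely, each of the five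
  values has an eigenvector built from zero-sum vectors on [n], and permutations of [n] act
  transitively on the arcs.\<close>

definition arcs :: "nat \<Rightarrow> (nat \<times> nat) set" where
  "arcs n = {(i, j). i \<in> {1..n} \<and> j \<in> {1..n} \<and> i \<noteq> j}"

definition arc_vertex :: "nat \<times> nat \<Rightarrow> nat set set" where
  "arc_vertex p = {{fst p}, {fst p, snd p}}"

lemma arc_vertex_Pair: "arc_vertex (i, j) = {{i}, {i, j}}"
  by (simp add: arc_vertex_def)

lemma finite_arcs: "finite (arcs n)"
  by (rule finite_subset[of _ "{1..n} \<times> {1..n}"]) (auto simp: arcs_def)

lemma arcs_swap: "(i, j) \<in> arcs n \<Longrightarrow> (j, i) \<in> arcs n"
  by (auto simp: arcs_def)

lemma singleton_neq_doubleton: "k \<noteq> l \<Longrightarrow> {i} \<noteq> {k, l}"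
  by (metis doubleton_eq_iff insert_absorb2)

lemma arc_vertex_inter:
  assumes "i \<noteq> j" "k \<noteq> l"
  shows "arc_vertex (i, j) \<inter> arc_vertex (k, l) =
    (if i = k then {{i}} else {}) \<union> (if {i, j} = {k, l} then {{i, j}} else {})"
  using singleton_neq_doubleton[OF assms(2), of i] singleton_neq_doubleton[OF assms(1), of k]
  unfolding arc_vertex_Pair by (auto simp del: insert_commute)

lemma L_adj_arc_vertex_iff:
  assumes "i \<noteq> j" "k \<noteq> l"
  shows "L_adj (arc_vertex (i, j)) (arc_vertex (k, l)) \<longleftrightarrow> (i = k \<and> j \<noteq> l) \<or> (k = j \<and> l = i)"
proof -
  have "{i} \<noteq> {i, j}"
    using singleton_neq_doubleton[OF assms(1)] .
  then show ?thesis
    unfolding L_adj_def arc_vertex_inter[OF assms] doubleton_eq_iff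
    using assms by auto
qed

lemma arc_vertex_eq_iff:
  assumes "i \<noteq> j" "k \<noteq> l"
  shows "arc_vertex (i, j) = arc_vertex (k, l) \<longleftrightarrow> (i, j) = (k, l)"
proof
  assume "arc_vertex (i, j) = arc_vertex (k, l)"
  then have "arc_vertex (i, j) \<inter> arc_vertex (k, l) = arc_vertex (i, j)"
    by simp
  then have "card (arc_vertex (i, j) \<inter> arc_vertex (k, l)) = 2"
    using singleton_neq_doubleton[OF assms(1), of i] by (simp add: arc_vertex_Pair)
  then show "(i, j) = (k, l)"
    unfolding arc_vertex_inter[OF assms] doubleton_eq_iff using assms
    by (auto split: if_splits)
qed simp

lemma inj_on_arc_vertex: "inj_on arc_vertex (arcs n)"
  by (auto intro!: inj_onI simp: arcs_def arc_vertex_eq_iff)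

lemma L_vertices_eq: "L_vertices n = arc_vertex ` arcs n"
proof (intro equalityI subsetI)
  have arc: "{a, b} \<in> arc_vertex ` arcs n"
    if a: "a \<in> H_vertices n" and b: "b \<in> H_vertices n" and ab: "a \<subset> b" for a b
  proof -
    have "finite b"
      using b unfolding H_vertices_def by (auto intro: finite_subset)
    then have "card a < card b"
      using ab by (rule psubset_card_mono)
    with a b have "card a = 1" "card b = 2"
      unfolding H_vertices_def by auto
    then obtain i j where "a = {i}" "b = {i, j}" "i \<noteq> j"
      using ab by (auto simp: card_1_singleton_iff card_2_iff)
    moreover have "i \<in> {1..n}" "j \<in> {1..n}"
      using b \<open>b = {i, j}\<close> unfolding H_vertices_def by auto
    ultimately show ?thesis
      by (auto simp: arcs_def arc_vertex_Pair intro!: image_eqI[of _ _ "(i, j)"])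
  qed
  fix e assume "e \<in> L_vertices n"
  then obtain v w where "e = {v, w}" "v \<in> H_vertices n" "w \<in> H_vertices n" "v \<subset> w \<or> w \<subset> v"
    unfolding L_vertices_def H_edges_def by blast
  then show "e \<in> arc_vertex ` arcs n"
    using arc[of v w] arc[of w v] by (metis insert_commute)
next
  fix e assume "e \<in> arc_vertex ` arcs n"
  then obtain i j where ij: "i \<in> {1..n}" "j \<in> {1..n}" "i \<noteq> j" and e: "e = {{i}, {i, j}}"
    by (auto simp: arcs_def arc_vertex_Pair)
  have "{i} \<in> H_vertices n" "{i, j} \<in> H_vertices n" "{i} \<subset> {i, j}"
    using ij unfolding H_vertices_def by auto
  then show "e \<in> L_vertices n"
    unfolding L_vertices_def H_edges_def e by blast
qed

lemma arc_neighbours: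
  assumes "(i, j) \<in> arcs n"
  shows "{q \<in> arcs n. L_adj (arc_vertex (i, j)) (arc_vertex q)} = Pair i ` ({1..n} - {i, j}) \<union> {(j, i)}"
  using assms by (auto simp: arcs_def L_adj_arc_vertex_iff)

definition row_sum :: "nat \<Rightarrow> (nat \<times> nat \<Rightarrow> complex) \<Rightarrow> nat \<Rightarrow> complex" where
  "row_sum n y i = (\<Sum>k\<in>{1..n} - {i}. y (i, k))"

lemma L_neighbour_sum:
  assumes ij: "(i, j) \<in> arcs n"
  shows "(\<Sum>w\<in>{w \<in> L_vertices n. L_adj (arc_vertex (i, j)) w}. x w) =
    row_sum n (x \<circ> arc_vertex) i - x (arc_vertex (i, j)) + x (arc_vertex (j, i))"
proof -
  let ?N = "{q \<in> arcs n. L_adj (arc_vertex (i, j)) (arc_vertex q)}"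
  have ij': "i \<in> {1..n}" "j \<in> {1..n}" "i \<noteq> j"
    using ij by (auto simp: arcs_def)
  have "{w \<in> L_vertices n. L_adj (arc_vertex (i, j)) w} = arc_vertex ` ?N"
    unfolding L_vertices_eq by auto
  moreover have "inj_on arc_vertex ?N"
    using inj_on_arc_vertex by (rule inj_on_subset) auto
  ultimately have "(\<Sum>w\<in>{w \<in> L_vertices n. L_adj (arc_vertex (i, j)) w}. x w) =
      (\<Sum>q\<in>?N. x (arc_vertex q))"
    by (simp add: sum.reindex)
  also have "\<dots> = (\<Sum>k\<in>{1..n} - {i} - {j}. x (arc_vertex (i, k))) + x (arc_vertex (j, i))"
    unfolding arc_neighbours[OF ij] using ij'
    by (subst sum.union_disjoint) (auto simp: sum.reindex inj_on_def Diff_insert2[symmetric])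
  also have "\<dots> = row_sum n (x \<circ> arc_vertex) i - x (arc_vertex (i, j)) + x (arc_vertex (j, i))"
    unfolding row_sum_def using ij' by (subst sum_diff1) auto
  finally show ?thesis .
qed

definition arc_eigenvector :: "nat \<Rightarrow> complex \<Rightarrow> (nat \<times> nat \<Rightarrow> complex) \<Rightarrow> bool" where
  "arc_eigenvector n \<mu> y \<longleftrightarrow> (\<exists>p\<in>arcs n. y p \<noteq> 0) \<and>
     (\<forall>(i, j)\<in>arcs n. row_sum n y i - y (i, j) + y (j, i) = \<mu> * y (i, j))"

lemma graph_eigenvalue_L_iff:
  "graph_eigenvalue (L_vertices n) L_adj \<mu> \<longleftrightarrow> (\<exists>y. arc_eigenvector n \<mu> y)"
proof
  assume "graph_eigenvalue (L_vertices n) L_adj \<mu>"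
  then obtain x where nz: "\<exists>v\<in>L_vertices n. x v \<noteq> 0"
    and eq: "\<forall>v\<in>L_vertices n. (\<Sum>w\<in>{w \<in> L_vertices n. L_adj v w}. x w) = \<mu> * x v"
    unfolding graph_eigenvalue_def by blast
  have "arc_eigenvector n \<mu> (x \<circ> arc_vertex)"
    unfolding arc_eigenvector_def
  proof (intro conjI ballI)
    show "\<exists>p\<in>arcs n. (x \<circ> arc_vertex) p \<noteq> 0"
      using nz unfolding L_vertices_eq by auto
  next
    fix p assume p: "p \<in> arcs n"
    obtain i j where [simp]: "p = (i, j)" by fastforce
    have "arc_vertex (i, j) \<in> L_vertices n"
      using p unfolding L_vertices_eq by simp
    with eq L_neighbour_sum[of i j n x] p
    show "case p of (i, j) \<Rightarrow>
        row_sum n (x \<circ> arc_vertex) i - (x \<circ> arc_vertex) (i, j) + (x \<circ> arc_vertex) (j, i) =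
        \<mu> * (x \<circ> arc_vertex) (i, j)"
      by simp
  qed
  then show "\<exists>y. arc_eigenvector n \<mu> y" by blast
next
  assume "\<exists>y. arc_eigenvector n \<mu> y"
  then obtain y where y: "arc_eigenvector n \<mu> y" ..
  define x where "x = y \<circ> the_inv_into (arcs n) arc_vertex"
  have x_arc: "x (arc_vertex p) = y p" if "p \<in> arcs n" for p
    unfolding x_def using the_inv_into_f_f[OF inj_on_arc_vertex that] by simp
  show "graph_eigenvalue (L_vertices n) L_adj \<mu>"
    unfolding graph_eigenvalue_def
  proof (intro exI conjI ballI)
    show "\<exists>v\<in>L_vertices n. x v \<noteq> 0"
      using y x_arc unfolding arc_eigenvector_def L_vertices_eq by auto
  next
    fix v assume "v \<in> L_vertices n"
    then obtain i j where ij: "(i, j) \<in> arcs n" and v: "v = arc_vertex (i, j)"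
      unfolding L_vertices_eq by auto
    have "row_sum n (x \<circ> arc_vertex) i = row_sum n y i"
      unfolding row_sum_def using ij by (intro sum.cong) (auto simp: x_arc arcs_def)
    then show "(\<Sum>w\<in>{w \<in> L_vertices n. L_adj v w}. x w) = \<mu> * x v"
      using y ij unfolding v L_neighbour_sum[OF ij] x_arc[OF ij] x_arc[OF arcs_swap[OF ij]]
        arc_eigenvector_def by auto
  qed
qed

lemma arc_eigenvector_eq:
  "arc_eigenvector n \<mu> y \<Longrightarrow> (i, j) \<in> arcs n \<Longrightarrow>
    row_sum n y i - y (i, j) + y (j, i) = \<mu> * y (i, j)"
  unfolding arc_eigenvector_def by auto

lemma arc_eigenvector_pair_eq:
  assumes y: "arc_eigenvector n \<mu> y" and ij: "(i, j) \<in> arcs n"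
  shows "\<mu> * (\<mu> + 2) * y (i, j) = (\<mu> + 1) * row_sum n y i + row_sum n y j"
  using arc_eigenvector_eq[OF y ij] arc_eigenvector_eq[OF y arcs_swap[OF ij]] by algebra

lemma arc_eigenvector_row_sum_eq:
  assumes y: "arc_eigenvector n \<mu> y" and i: "i \<in> {1..n}"
  shows "(\<mu> + 1) * (\<mu> - (of_nat n - 2)) * row_sum n y i = (\<Sum>k\<in>{1..n}. row_sum n y k)"
proof -
  let ?R = "row_sum n y"
  have "\<mu> * (\<mu> + 2) * ?R i = (\<Sum>j\<in>{1..n} - {i}. \<mu> * (\<mu> + 2) * y (i, j))"
    unfolding row_sum_def by (simp add: sum_distrib_left)
  also have "\<dots> = (\<Sum>j\<in>{1..n} - {i}. (\<mu> + 1) * ?R i + ?R j)"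
    using i by (intro sum.cong arc_eigenvector_pair_eq[OF y]) (auto simp: arcs_def)
  also have "\<dots> = (of_nat n - 1) * (\<mu> + 1) * ?R i + ((\<Sum>k\<in>{1..n}. ?R k) - ?R i)"
    using i by (simp add: sum.distrib sum_diff1 of_nat_diff)
  finally show ?thesis
    by algebra
qed

lemma arc_eigenvalue_cases:
  assumes y: "arc_eigenvector n \<mu> y"
  shows "\<mu> \<in> {-2, -1, 0, of_nat n - 2, of_nat n - 1}"
proof -
  define c where "c = (\<mu> + 1) * (\<mu> - (of_nat n - 2))"
  define T where "T = (\<Sum>k\<in>{1..n}. row_sum n y k)"
  have row: "c * row_sum n y i = T" if "i \<in> {1..n}" for i
    unfolding c_def T_def using arc_eigenvector_row_sum_eq[OF y that] .
  have total: "c * T = of_nat n * T"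
    unfolding T_def by (simp add: sum_distrib_left row[unfolded T_def])
  obtain i j where ij: "(i, j) \<in> arcs n" and nz: "y (i, j) \<noteq> 0"
    using y unfolding arc_eigenvector_def by auto
  consider "c = 0" | "c \<noteq> 0" "T = 0" | "c = of_nat n"
    using total by fastforce
  then show ?thesis
  proof cases
    case 1
    then show ?thesis
      unfolding c_def by (auto simp: eq_neg_iff_add_eq_0[symmetric])
  next
    case 2
    then have "row_sum n y i = 0" "row_sum n y j = 0"
      using row ij by (auto simp: arcs_def)
    then have "\<mu> * (\<mu> + 2) = 0"
      using arc_eigenvector_pair_eq[OF y ij] nz by simp
    then show ?thesis
      by (auto simp: eq_neg_iff_add_eq_0[symmetric])
  next
    case 3
    then have "(\<mu> - (of_nat n - 1)) * (\<mu> + 2) = 0"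
      unfolding c_def by (simp add: algebra_simps)
    then show ?thesis
      by (auto simp: eq_neg_iff_add_eq_0[symmetric])
  qed
qed

lemma sum_Diff_singleton_eq_neg:
  fixes g :: "'a \<Rightarrow> 'b::ab_group_add"
  assumes "finite A" "i \<in> A" "sum g A = 0"
  shows "(\<Sum>k\<in>A - {i}. g k) = - g i"
  using assms by (simp add: sum_diff1)

lemma arc_eigenvector_linear:
  fixes g :: "nat \<Rightarrow> complex"
  assumes g: "(\<Sum>k\<in>{1..n}. g k) = 0"
    and \<alpha>: "(of_nat n - 2) * \<alpha> = \<mu> * \<alpha>" and \<beta>: "\<alpha> - \<beta> = \<mu> * \<beta>"
    and ij: "(i, j) \<in> arcs n" and nz: "\<alpha> * g i + \<beta> * g j \<noteq> 0"
  shows "arc_eigenvector n \<mu> (\<lambda>(a, b). \<alpha> * g a + \<beta> * g b)"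
  (is "arc_eigenvector n \<mu> ?y")
  unfolding arc_eigenvector_def
proof (intro conjI ballI)
  show "\<exists>p\<in>arcs n. ?y p \<noteq> 0"
    using ij nz by force
next
  fix p assume "p \<in> arcs n"
  then obtain a b where p: "p = (a, b)" and a: "a \<in> {1..n}"
    by (auto simp: arcs_def)
  have "row_sum n ?y a = (of_nat n - 1) * \<alpha> * g a - \<beta> * g a"
    unfolding row_sum_def using a sum_Diff_singleton_eq_neg[of "{1..n}" a g] g
    by (simp add: sum.distrib sum_distrib_left[symmetric] of_nat_diff algebra_simps)
  then show "case p of (a, b) \<Rightarrow> row_sum n ?y a - ?y (a, b) + ?y (b, a) = \<mu> * ?y (a, b)"
    unfolding p using \<alpha> \<beta> by simp algebra
qed

lemma arc_eigenvector_product: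
  fixes f h :: "nat \<Rightarrow> complex"
  assumes f: "(\<Sum>k\<in>{1..n}. f k) = 0" and h: "(\<Sum>k\<in>{1..n}. h k) = 0"
    and disjoint: "\<And>k. f k * h k = 0" and s: "s * s = 1"
    and ij: "(i, j) \<in> arcs n" and nz: "f i * h j + s * h i * f j \<noteq> 0"
  shows "arc_eigenvector n (s - 1) (\<lambda>(a, b). f a * h b + s * h a * f b)"
  (is "arc_eigenvector n _ ?y")
  unfolding arc_eigenvector_def
proof (intro conjI ballI)
  show "\<exists>p\<in>arcs n. ?y p \<noteq> 0"
    using ij nz by force
next
  fix p assume "p \<in> arcs n"
  then obtain a b where p: "p = (a, b)" and a: "a \<in> {1..n}"
    by (auto simp: arcs_def)
  have "row_sum n ?y a = f a * (\<Sum>k\<in>{1..n} - {a}. h k) + s * h a * (\<Sum>k\<in>{1..n} - {a}. f k)"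
    unfolding row_sum_def by (simp add: sum.distrib sum_distrib_left)
  also have "\<dots> = - (1 + s) * (f a * h a)"
    using a f h by (simp add: sum_Diff_singleton_eq_neg algebra_simps)
  finally show "case p of (a, b) \<Rightarrow> row_sum n ?y a - ?y (a, b) + ?y (b, a) = (s - 1) * ?y (a, b)"
    unfolding p using disjoint[of a] s by simp algebra
qed

lemma arc_eigenvector_const:
  assumes "n \<ge> 2"
  shows "arc_eigenvector n (of_nat n - 1) (\<lambda>_. 1)"
  unfolding arc_eigenvector_def row_sum_def
proof (intro conjI ballI)
  show "\<exists>p\<in>arcs n. (1::complex) \<noteq> 0"
    using assms by (intro bexI[of _ "(1, 2)"]) (auto simp: arcs_def)
qed (auto simp: arcs_def of_nat_diff)

definition dipole :: "nat \<Rightarrow> nat \<Rightarrow> nat \<Rightarrow> complex" where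
  "dipole a b k = (if k = a then 1 else 0) - (if k = b then 1 else 0)"

lemma sum_dipole: "a \<in> A \<Longrightarrow> b \<in> A \<Longrightarrow> finite A \<Longrightarrow> (\<Sum>k\<in>A. dipole a b k) = 0"
  by (simp add: dipole_def sum_subtractf)

lemma arc_eigenvalue_exists:
  assumes n: "n > 3" and \<mu>: "\<mu> \<in> {-2, -1, 0, of_nat n - 2, of_nat n - 1}"
  shows "\<exists>y. arc_eigenvector n \<mu> y"
proof -
  \<comment> \<open>The eigenvalues -2 and 0 need two zero-sum vectors with disjoint supports, hence n \<ge> 4.\<close>
  have arcs: "(1, 3) \<in> arcs n" "(2, 1) \<in> arcs n"
    using n by (auto simp: arcs_def)
  have sums: "(\<Sum>k\<in>{1..n}. dipole 1 2 k) = 0" "(\<Sum>k\<in>{1..n}. dipole 3 4 k) = 0"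
    using n by (auto intro: sum_dipole)
  have disjoint: "dipole 1 2 k * dipole 3 4 k = 0" for k
    by (simp add: dipole_def)
  have product: "\<exists>y. arc_eigenvector n (s - 1) y" if "s * s = 1" for s
    using arc_eigenvector_product[OF sums disjoint that arcs(1)] that
    by (force simp: dipole_def)
  have linear: "\<exists>y. arc_eigenvector n \<mu> y"
    if "(of_nat n - 2) * \<alpha> = \<mu> * \<alpha>" "\<alpha> - 1 = \<mu>" "\<alpha> * dipole 1 2 2 + dipole 1 2 1 \<noteq> 0" for \<alpha>
    using arc_eigenvector_linear[OF sums(1), of \<alpha> \<mu> 1, OF _ _ arcs(2)] that by auto
  from \<mu> consider "\<mu> = -2" | "\<mu> = -1" | "\<mu> = 0" | "\<mu> = of_nat n - 2" | "\<mu> = of_nat n - 1"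
    by blast
  then show ?thesis
  proof cases
    case 1
    then show ?thesis using product[of "-1"] by simp
  next
    case 2
    then show ?thesis using linear[of 0] by (simp add: dipole_def)
  next
    case 3
    then show ?thesis using product[of 1] by simp
  next
    case 4
    have "(of_nat n :: complex) \<noteq> 2"
      using n of_nat_eq_iff[of n 2, where 'a = complex] by simp
    then show ?thesis
      using 4 linear[of "of_nat n - 1"] by (simp add: dipole_def)
  next
    case 5
    then show ?thesis using arc_eigenvector_const[of n] n by auto
  qed
qed

lemma L_adj_image_image:
  assumes "inj \<pi>"
  shows "L_adj (image \<pi> ` x) (image \<pi> ` y) \<longleftrightarrow> L_adj x y"
proof -
  have "inj (image \<pi>)"
    using assms by (simp add: inj_def inj_image_eq_iff)
  then show ?thesis
    unfolding L_adj_def by (simp add: image_Int[symmetric] card_image inj_on_subset)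
qed

lemma arcs_two_transitive:
  assumes ij: "(i, j) \<in> arcs n" and kl: "(k, l) \<in> arcs n"
  shows "\<exists>\<pi>. \<pi> permutes {1..n} \<and> \<pi> i = k \<and> \<pi> j = l"
proof -
  define j' where "j' = transpose i k j"
  have "j' \<noteq> k" "j' \<in> {1..n}"
    using ij kl unfolding j'_def arcs_def by (auto simp: transpose_def)
  then have "transpose j' l \<circ> transpose i k permutes {1..n}"
    and "(transpose j' l \<circ> transpose i k) i = k" "(transpose j' l \<circ> transpose i k) j = l"
    using ij kl unfolding arcs_def j'_def by (auto intro!: permutes_compose permutes_swap_id)
  then show ?thesis
    by blast
qed

lemma image_image_arc_vertex: "image \<pi> ` arc_vertex (i, j) = arc_vertex (\<pi> i, \<pi> j)"
  by (simp add: arc_vertex_Pair)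

lemma permutes_arcs: "\<pi> permutes {1..n} \<Longrightarrow> (i, j) \<in> arcs n \<Longrightarrow> (\<pi> i, \<pi> j) \<in> arcs n"
  using permutes_in_image permutes_inj by (fastforce simp: arcs_def inj_eq)

lemma vertex_transitive_L: "vertex_transitive (L_vertices n) L_adj"
  unfolding vertex_transitive_def
proof (intro ballI)
  fix u v assume "u \<in> L_vertices n" "v \<in> L_vertices n"
  then obtain i j k l where ij: "(i, j) \<in> arcs n" and kl: "(k, l) \<in> arcs n"
    and u: "u = arc_vertex (i, j)" and v: "v = arc_vertex (k, l)"
    unfolding L_vertices_eq by auto
  obtain \<pi> where \<pi>: "\<pi> permutes {1..n}" "\<pi> i = k" "\<pi> j = l"
    using arcs_two_transitive[OF ij kl] by blast
  let ?\<sigma> = "image (image \<pi>)"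
  have inj: "inj_on ?\<sigma> (L_vertices n)"
    using permutes_inj[OF \<pi>(1)] by (simp add: inj_on_def inj_image_eq_iff)
  have "?\<sigma> ` L_vertices n \<subseteq> L_vertices n"
  proof (rule image_subsetI)
    fix e assume "e \<in> L_vertices n"
    then obtain a b where "(a, b) \<in> arcs n" "e = arc_vertex (a, b)"
      unfolding L_vertices_eq by auto
    then show "?\<sigma> e \<in> L_vertices n"
      unfolding L_vertices_eq using permutes_arcs[OF \<pi>(1)] by (auto simp: image_image_arc_vertex)
  qed
  moreover have "finite (L_vertices n)"
    unfolding L_vertices_eq using finite_arcs by simp
  ultimately have "bij_betw ?\<sigma> (L_vertices n) (L_vertices n)"
    using endo_inj_surj inj unfolding bij_betw_def by metis
  moreover have "\<forall>x\<in>L_vertices n. \<forall>y\<in>L_vertices n. L_adj x y \<longleftrightarrow> L_adj (?\<sigma> x) (?\<sigma> y)"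
    using L_adj_image_image[OF permutes_inj[OF \<pi>(1)]] by blast
  moreover have "?\<sigma> u = v"
    unfolding u v image_image_arc_vertex \<pi>(2,3) ..
  ultimately show "\<exists>\<sigma>. bij_betw \<sigma> (L_vertices n) (L_vertices n) \<and>
      (\<forall>x\<in>L_vertices n. \<forall>y\<in>L_vertices n. L_adj x y \<longleftrightarrow> L_adj (\<sigma> x) (\<sigma> y)) \<and> \<sigma> u = v"
    by blast
qed

theorem theorem3p4:
  fixes n :: nat
  assumes "n > 3"
  shows "vertex_transitive (L_vertices n) L_adj \<and> integral_graph (L_vertices n) L_adj \<and>
         {\<mu>. graph_eigenvalue (L_vertices n) L_adj \<mu>} =
           {-2, -1, 0, of_nat n - 2, of_nat n - 1}"
proof -
  have spectrum: "{\<mu>. graph_eigenvalue (L_vertices n) L_adj \<mu>} = {-2, -1, 0, of_nat n - 2, of_nat n - 1}"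
    using arc_eigenvalue_cases arc_eigenvalue_exists[OF assms]
    unfolding graph_eigenvalue_L_iff by blast
  then have "integral_graph (L_vertices n) L_adj"
    unfolding integral_graph_def set_eq_iff by (auto intro: Ints_diff)
  with vertex_transitive_L spectrum show ?thesis
    by blast
qed

end
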